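(* Let $n\ge 2$, let $A\in\mathbb{R}^{n\times n}$ be symmetric positive definite, $B=A^{1/2}$, $C=A^{-1}$, $E=\{x:x^{\top}A^{-1}x=1\}$, fix $x_0$ with $x_0^{\top}A^{-1}x_0=1$ and put $y_0=B^{-1}x_0$. For every parallelepiped $P$ inscribed in $E$ having $x_0$ as a vertex, \[ S(P)\le 2^n n^{-\frac{n-2}{2}}\sqrt{\det A}\,\sqrt{\operatorname{tr}(A^{-1})}. \] Write the edge vectors of $P$, with signs chosen so that $x_0=\tfrac12\sum_iv_i$, as $v_i=\lambda_iBu_i$ with $\lambda_i>0$, $U=[u_1\ \cdots\ u_n]\in O(n)$, and set $\beta_i=\langle u_i,y_0\rangle$ and $\alpha_i=\sqrt{(U^{\top}CU)_{ii}}$. If $n\ge3$, equality holds if and only if $\beta_i=1/\sqrt n$ for all $i$ and $\operatorname{diag}(U^{\top}CU)=\frac{\operatorname{tr}(C)}{n}\mathbf 1$. If $n=2$, the bound is sharp (attained for every such $x_0$) and equality holds precisely when $(\alpha_1,\alpha_2)$ is proportional to $(1/\beta_1,1/\beta_2)$.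
   Context: A (centred, $n$-dimensional) parallelepiped with linearly independent edge vectors $v_1,\dots,v_n$ is $P=\{\sum_it_iv_i:|t_i|\le\tfrac12\}$ with vertices $\tfrac12\sum_i\varepsilon_iv_i$, $\varepsilon\in\{\pm1\}^n$; it is inscribed in $E$ if all vertices satisfy $x^{\top}A^{-1}x=1$. For inscribed $P$ the vectors $B^{-1}v_i$ are pairwise orthogonal, so the decomposition $v_i=\lambda_iBu_i$ with $U\in O(n)$ exists, and then $\lambda_i=2\beta_i>0$. $S(P)$ is the total $(n-1)$-dimensional measure of the $2n$ facets: with $G=V^{\top}V$, $V=[v_1\ \cdots\ v_n]$, $S(P)=2\sum_i\sqrt{\det G_{-i,-i}}$. $\mathbf 1=(1,\dots,1)^{\top}$, and $\operatorname{diag}(M)$ is the vector of diagonal entries of $M$. *)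

theory Defs
  imports "HOL-Analysis.Analysis"
begin

definition sym_pos_def :: "real^'n^'n \<Rightarrow> bool" where
  "sym_pos_def A \<longleftrightarrow> transpose A = A \<and> (\<forall>x. x \<noteq> 0 \<longrightarrow> x \<bullet> (A *v x) > 0)"

definition ell_form :: "real^'n^'n \<Rightarrow> real^'n \<Rightarrow> real" where
  "ell_form A x = x \<bullet> (matrix_inv A *v x)"

definition edge_matrix :: "('n \<Rightarrow> real^'n) \<Rightarrow> real^'n^'n" where
  "edge_matrix v = (\<chi> r c. v c $ r)"

definition sign_vec :: "('n \<Rightarrow> real) \<Rightarrow> bool" where
  "sign_vec e \<longleftrightarrow> (\<forall>i. e i = 1 \<or> e i = -1)"

definition vertex :: "('n::finite \<Rightarrow> real^'n) \<Rightarrow> ('n \<Rightarrow> real) \<Rightarrow> real^'n" where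
  "vertex v e = (1/2) *\<^sub>R (\<Sum>i\<in>UNIV. e i *\<^sub>R v i)"

text \<open>Determinant of the principal submatrix obtained by deleting row and column i
  (Leibniz formula over permutations of the remaining indices).\<close>
definition del_minor_det :: "real^'n^'n \<Rightarrow> 'n \<Rightarrow> real" where
  "del_minor_det M i =
     (\<Sum>p\<in>{p. p permutes (UNIV - {i})}. of_int (sign p) * (\<Prod>j\<in>UNIV - {i}. M $ j $ p j))"

text \<open>Total facet measure S(P) = 2 sum_i sqrt(det G_{-i,-i}), G = V^T V.\<close>
definition surface_area :: "('n::finite \<Rightarrow> real^'n) \<Rightarrow> real" where
  "surface_area v = 2 * (\<Sum>i\<in>UNIV.
      sqrt (del_minor_det (transpose (edge_matrix v) ** edge_matrix v) i))"

definition inscribed :: "real^'n^'n \<Rightarrow> ('n::finite \<Rightarrow> real^'n) \<Rightarrow> bool" where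
  "inscribed A v \<longleftrightarrow> inj v \<and> independent (range v) \<and>
     (\<forall>e. sign_vec e \<longrightarrow> ell_form A (vertex v e) = 1)"

definition has_vertex :: "('n::finite \<Rightarrow> real^'n) \<Rightarrow> real^'n \<Rightarrow> bool" where
  "has_vertex v x \<longleftrightarrow> (\<exists>e. sign_vec e \<and> vertex v e = x)"

end

theory Submission
  imports Defs
begin

text \<open>
  Applying \<open>B\<^sup>-\<^sup>1\<close>, where \<open>B\<^sup>2 = A\<close>, turns the ellipsoid into the unit sphere and an inscribed
  parallelepiped into an inscribed box. So, with suitable signs, the edges are
  \<open>v\<^sub>i = \<lambda>\<^sub>i B u\<^sub>i\<close> for an orthogonal matrix \<open>U\<close>, and since \<open>x\<^sub>0 = \<Sum> v\<^sub>i / 2\<close> we get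
  \<open>\<lambda>\<^sub>i = 2 \<beta>\<^sub>i\<close> with \<open>\<Sum> \<beta>\<^sub>i\<^sup>2 = 1\<close>. A facet measure is the square root of a principal minor of the
  Gram matrix \<open>G = V\<^sup>T V\<close>, and such a minor is \<open>det G\<close> times a diagonal entry of \<open>G\<^sup>-\<^sup>1\<close>; this gives
  \<open>S(P) = 2\<^sup>n \<surd>(det A) (\<Prod> \<beta>\<^sub>i) (\<Sum> \<alpha>\<^sub>i / \<beta>\<^sub>i)\<close> with \<open>\<Sum> \<alpha>\<^sub>i\<^sup>2 = tr A\<^sup>-\<^sup>1\<close>.
  Cauchy-Schwarz bounds \<open>\<Sum> \<alpha>\<^sub>i / \<beta>\<^sub>i\<close> by \<open>\<surd>(tr A\<^sup>-\<^sup>1) (\<Sum> \<beta>\<^sub>i\<^sup>-\<^sup>2)\<^sup>1\<^sup>/\<^sup>2\<close>, and Maclaurin's inequality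
  for \<open>t\<^sub>i = \<beta>\<^sub>i\<^sup>2\<close> gives \<open>(\<Prod> t\<^sub>i) (\<Sum> 1 / t\<^sub>i) \<le> n\<^sup>2\<^sup>-\<^sup>n\<close>. Equality forces \<open>\<alpha>\<close> to be proportional
  to \<open>1 / \<beta>\<close> and, for \<open>n \<ge> 3\<close>, all \<open>\<beta>\<^sub>i\<close> to be equal. For \<open>n = 2\<close> the Maclaurin step is an
  identity, and rotating an orthonormal frame realises the proportionality by the intermediate
  value theorem.
\<close>

section \<open>Elementary inequalities\<close>

lemma prod_le_mean_power:
  fixes t :: "'a \<Rightarrow> real"
  assumes "finite S" "S \<noteq> {}" "\<And>i. i \<in> S \<Longrightarrow> t i \<ge> 0"
  shows "(\<Prod>i\<in>S. t i) \<le> ((\<Sum>i\<in>S. t i) / card S) ^ card S"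
proof -
  have card_pos: "card S > 0"
    using assms by (simp add: card_gt_0_iff)
  have prod_nonneg: "(\<Prod>i\<in>S. t i) \<ge> 0"
    using assms by (simp add: prod_nonneg)
  have "(\<Prod>i\<in>S. t i) = ((\<Prod>i\<in>S. t i) powr (1 / card S)) ^ card S"
    using card_pos prod_nonneg
    by (cases "(\<Prod>i\<in>S. t i) = 0") (simp_all add: powr_powr flip: powr_realpow)
  also have "\<dots> \<le> ((\<Sum>i\<in>S. t i) / card S) ^ card S"
    using arith_geom_mean[OF assms] by (intro power_mono) (simp_all add: sum_divide_distrib)
  finally show ?thesis .
qed

text \<open>This is AM-GM for \<open>k - 1\<close> copies of \<open>(k + 1) a\<close> and one copy of \<open>a + k s\<close>;
  it follows from Bernoulli's inequality at \<open>x = (s - a) / ((k + 1) a)\<close>.\<close>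
lemma power_mean_step:
  fixes a s :: real and k :: nat
  assumes a: "a > 0" and s: "s > 0" and k: "k \<ge> 1"
  shows "(real k + 1) ^ (k - 1) * a ^ (k - 1) * (a + k * s) \<le> (k * a + s) ^ k"
proof -
  define x where "x = (s - a) / ((real k + 1) * a)"
  have ka_pos: "(real k + 1) * a > 0"
    using a by simp
  have "real k * a \<ge> 0"
    using a by simp
  then have "-((real k + 1) * a) \<le> s - a"
    using s by (simp add: algebra_simps)
  then have x_ge: "-1 \<le> x"
    unfolding x_def using ka_pos by (simp add: le_divide_eq)
  have x_mult: "(real k + 1) * a * x = s - a"
    unfolding x_def using a by simp
  obtain m where m: "k = Suc m"
    using k by (cases k) auto
  have "a + k * s = (real k + 1) * a + k * ((real k + 1) * a * x)"
    unfolding x_mult by (simp add: algebra_simps)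
  also have "\<dots> = (real k + 1) * a * (1 + k * x)"
    by (simp add: algebra_simps)
  finally have "(real k + 1) ^ (k - 1) * a ^ (k - 1) * (a + k * s)
      = (real k + 1) ^ (k - 1) * a ^ (k - 1) * ((real k + 1) * a * (1 + k * x))"
    by simp
  also have "\<dots> = (real k + 1) ^ k * a ^ k * (1 + k * x)"
    unfolding m by (simp add: mult_ac)
  also have "\<dots> \<le> (real k + 1) ^ k * a ^ k * (1 + x) ^ k"
    using Bernoulli_inequality[OF x_ge] a by (intro mult_left_mono) simp_all
  also have "\<dots> = (k * a + s) ^ k"
  proof -
    have "k * a + s = (real k + 1) * a * (1 + x)"
      using x_mult by (simp add: algebra_simps)
    then show ?thesis
      by (simp add: power_mult_distrib)
  qed
  finally show ?thesis .
qed

text \<open>The induction step for Maclaurin's inequality: \<open>P\<close> and \<open>Q\<close> are \<open>\<Prod>t\<close> and \<open>\<Sum>1/t\<close> over \<open>k\<close> old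
  values with mean \<open>a\<close>, and \<open>s\<close> is the new value.\<close>
lemma maclaurin_step:
  fixes P Q a s :: real and k :: nat
  assumes k: "k \<ge> 1" and a: "a > 0" and s: "s > 0"
    and P: "P \<le> a ^ k" and PQ: "P * Q \<le> k * a ^ (k - 1)"
  shows "(real k + 1) ^ k * (P + s * (P * Q)) \<le> (real k + 1) * (k * a + s) ^ k"
proof -
  have "P + s * (P * Q) \<le> a ^ k + s * (k * a ^ (k - 1))"
    using P PQ s by (simp add: add_mono)
  also have "\<dots> = a ^ (k - 1) * (a + k * s)"
    using k by (cases k) (auto simp: algebra_simps)
  finally have "P + s * (P * Q) \<le> a ^ (k - 1) * (a + k * s)" .
  then have "(real k + 1) ^ k * (P + s * (P * Q)) \<le> (real k + 1) ^ k * (a ^ (k - 1) * (a + k * s))"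
    by (rule mult_left_mono) simp
  also have "\<dots> = (real k + 1) * ((real k + 1) ^ (k - 1) * a ^ (k - 1) * (a + k * s))"
    using k by (cases k) (simp_all add: mult_ac)
  also have "\<dots> \<le> (real k + 1) * (k * a + s) ^ k"
    using power_mean_step[OF a s k] by (intro mult_left_mono) simp_all
  finally show ?thesis .
qed

text \<open>Maclaurin's inequality between the first and the \<open>(N - 1)\<close>-st elementary symmetric means,
  as \<open>(\<Prod>t) (\<Sum>1/t) = e\<^sub>N\<^sub>-\<^sub>1(t)\<close>.\<close>
lemma maclaurin_inequality:
  fixes t :: "'a \<Rightarrow> real"
  assumes "finite S" "S \<noteq> {}" "\<And>i. i \<in> S \<Longrightarrow> t i > 0"
  shows "real (card S) ^ (card S - 1) * ((\<Prod>i\<in>S. t i) * (\<Sum>i\<in>S. 1 / t i))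
           \<le> real (card S) * (\<Sum>i\<in>S. t i) ^ (card S - 1)"
  using assms
proof (induction S rule: finite_ne_induct)
  case (singleton x)
  then show ?case by simp
next
  case (insert x F)
  define k where "k = card F"
  define P where "P = (\<Prod>i\<in>F. t i)"
  define Q where "Q = (\<Sum>i\<in>F. 1 / t i)"
  define a where "a = (\<Sum>i\<in>F. t i) / k"
  define s where "s = t x"
  have k: "k \<ge> 1"
    using insert by (simp add: k_def Suc_leI card_gt_0_iff)
  have s_pos: "s > 0" and a_pos: "a > 0"
    using insert k by (simp_all add: s_def a_def sum_pos)
  have sum_F: "(\<Sum>i\<in>F. t i) = k * a"
    using k by (simp add: a_def)
  have P_le: "P \<le> a ^ k"
    using prod_le_mean_power[of F t] insert by (simp add: P_def a_def k_def less_imp_le)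
  have "real k ^ (k - 1) * (P * Q) \<le> real k ^ (k - 1) * (k * a ^ (k - 1))"
    using insert.IH insert.prems sum_F by (simp add: P_def Q_def k_def power_mult_distrib algebra_simps)
  then have PQ_le: "P * Q \<le> k * a ^ (k - 1)"
    using k by simp
  have "(\<Prod>i\<in>insert x F. t i) * (\<Sum>i\<in>insert x F. 1 / t i) = s * P * (1 / s + Q)"
    using insert by (simp add: P_def Q_def s_def)
  also have "\<dots> = P + s * (P * Q)"
    using s_pos by (simp add: field_simps)
  finally show ?case
    using maclaurin_step[OF k a_pos s_pos P_le PQ_le] insert
    by (simp add: k_def sum_F s_def add.commute)
qed

lemma sum_remove2:
  assumes "finite S" "i \<in> S" "j \<in> S" "i \<noteq> j"
  shows "sum f S = f i + f j + sum f (S - {i, j})"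
proof -
  have "sum f S = f i + sum f (S - {i})"
    using assms by (simp add: sum.remove)
  also have "sum f (S - {i}) = f j + sum f (S - {i} - {j})"
    using assms by (simp add: sum.remove)
  also have "S - {i} - {j} = S - {i, j}"
    by auto
  finally show ?thesis
    by (simp add: add.assoc)
qed

lemma prod_mult_sum_inverse_remove2:
  fixes t :: "'a \<Rightarrow> real"
  assumes "finite S" "i \<in> S" "j \<in> S" "i \<noteq> j" "t i > 0" "t j > 0"
  shows "(\<Prod>l\<in>S. t l) * (\<Sum>l\<in>S. 1 / t l) =
     (\<Prod>l\<in>S - {i, j}. t l) * (t i * t j * (\<Sum>l\<in>S - {i, j}. 1 / t l) + t i + t j)"
proof -
  have S: "S = insert i (insert j (S - {i, j}))"
    using assms by auto
  have prod_S: "(\<Prod>l\<in>S. t l) = t i * t j * (\<Prod>l\<in>S - {i, j}. t l)"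
    by (subst S) (use assms in simp)
  have sum_S: "(\<Sum>l\<in>S. 1 / t l) = 1 / t i + 1 / t j + (\<Sum>l\<in>S - {i, j}. 1 / t l)"
    using sum_remove2[OF assms(1-4)] .
  show ?thesis
    unfolding prod_S sum_S using assms by (simp add: field_simps)
qed

lemma prod_mult_sum_inverse_smoothing:
  fixes t :: "'a \<Rightarrow> real"
  assumes S: "finite S" "S - {i, j} \<noteq> {}" and ij: "i \<in> S" "j \<in> S" "t i \<noteq> t j"
    and pos: "\<And>l. l \<in> S \<Longrightarrow> t l > 0"
  defines "t' \<equiv> t(i := (t i + t j) / 2, j := (t i + t j) / 2)"
  shows "(\<Prod>l\<in>S. t l) * (\<Sum>l\<in>S. 1 / t l) < (\<Prod>l\<in>S. t' l) * (\<Sum>l\<in>S. 1 / t' l)"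
    and "(\<Sum>l\<in>S. t' l) = (\<Sum>l\<in>S. t l)"
proof -
  define m where "m = (t i + t j) / 2"
  have "i \<noteq> j"
    using ij by auto
  have ti: "t i > 0" and tj: "t j > 0"
    using pos ij by auto
  then have m_pos: "m > 0"
    by (simp add: m_def)
  have t'_ij: "t' i = m" "t' j = m"
    using \<open>i \<noteq> j\<close> by (simp_all add: t'_def m_def)
  have rest: "l \<in> S - {i, j} \<Longrightarrow> t' l = t l" for l
    by (simp add: t'_def)
  have Q_pos: "(\<Sum>l\<in>S - {i, j}. 1 / t l) > 0"
    using S pos by (intro sum_pos) auto
  have P_pos: "(\<Prod>l\<in>S - {i, j}. t l) > 0"
    using pos by (intro prod_pos) auto
  have mm: "t i * t j < m * m"
  proof -
    have "m * m - t i * t j = (t i - t j)\<^sup>2 / 4"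
      by (simp add: m_def power2_eq_square algebra_simps add_divide_distrib)
    moreover have "0 < (t i - t j)\<^sup>2"
      using ij by simp
    ultimately show ?thesis
      by linarith
  qed
  have ti_tj: "t i + t j = m + m"
    by (simp add: m_def)
  then have "t i * t j * (\<Sum>l\<in>S - {i, j}. 1 / t l) + t i + t j
             < m * m * (\<Sum>l\<in>S - {i, j}. 1 / t l) + m + m"
    using mult_strict_right_mono[OF mm Q_pos] by linarith
  then have "(\<Prod>l\<in>S - {i, j}. t l) * (t i * t j * (\<Sum>l\<in>S - {i, j}. 1 / t l) + t i + t j)
      < (\<Prod>l\<in>S - {i, j}. t l) * (m * m * (\<Sum>l\<in>S - {i, j}. 1 / t l) + m + m)"
    using P_pos by (rule mult_strict_left_mono)
  moreover have "(\<Prod>l\<in>S - {i, j}. t' l) = (\<Prod>l\<in>S - {i, j}. t l)"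
    by (rule prod.cong) (simp_all add: rest)
  moreover have "(\<Sum>l\<in>S - {i, j}. 1 / t' l) = (\<Sum>l\<in>S - {i, j}. 1 / t l)"
    by (rule sum.cong) (simp_all add: rest)
  ultimately show "(\<Prod>l\<in>S. t l) * (\<Sum>l\<in>S. 1 / t l) < (\<Prod>l\<in>S. t' l) * (\<Sum>l\<in>S. 1 / t' l)"
    using prod_mult_sum_inverse_remove2[OF S(1) ij(1,2) \<open>i \<noteq> j\<close> ti tj]
      prod_mult_sum_inverse_remove2[OF S(1) ij(1,2) \<open>i \<noteq> j\<close>, of t'] m_pos
    by (simp add: t'_ij)
  have "(\<Sum>l\<in>S - {i, j}. t' l) = (\<Sum>l\<in>S - {i, j}. t l)"
    by (rule sum.cong) (simp_all add: rest)
  then show "(\<Sum>l\<in>S. t' l) = (\<Sum>l\<in>S. t l)"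
    using sum_remove2[OF S(1) ij(1,2) \<open>i \<noteq> j\<close>, of t] sum_remove2[OF S(1) ij(1,2) \<open>i \<noteq> j\<close>, of t']
      t'_ij ti_tj by linarith
qed

lemma maclaurin_equality_imp_eq:
  fixes t :: "'a \<Rightarrow> real"
  assumes S: "finite S" "card S \<ge> 3" and pos: "\<And>i. i \<in> S \<Longrightarrow> t i > 0"
    and eq: "real (card S) ^ (card S - 1) * ((\<Prod>i\<in>S. t i) * (\<Sum>i\<in>S. 1 / t i))
           = real (card S) * (\<Sum>i\<in>S. t i) ^ (card S - 1)"
    and i: "i \<in> S" and j: "j \<in> S"
  shows "t i = t j"
proof (rule ccontr)
  assume ne: "t i \<noteq> t j"
  define t' where "t' = t(i := (t i + t j) / 2, j := (t i + t j) / 2)"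
  have "i \<noteq> j"
    using ne by auto
  have "S - {i, j} \<noteq> {}"
  proof
    assume "S - {i, j} = {}"
    then have "card S \<le> card {i, j}"
      by (intro card_mono) auto
    then show False
      using S \<open>i \<noteq> j\<close> by simp
  qed
  note smoothing = prod_mult_sum_inverse_smoothing[OF S(1) this i j ne pos, folded t'_def]
  have pos': "\<And>l. l \<in> S \<Longrightarrow> t' l > 0"
    using pos pos[OF i] pos[OF j] by (simp add: t'_def)
  have "real (card S) ^ (card S - 1) * ((\<Prod>i\<in>S. t i) * (\<Sum>i\<in>S. 1 / t i))
      < real (card S) ^ (card S - 1) * ((\<Prod>i\<in>S. t' i) * (\<Sum>i\<in>S. 1 / t' i))"
    using smoothing(1) S(2) by (intro mult_strict_left_mono) simp_all
  also have "\<dots> \<le> real (card S) * (\<Sum>i\<in>S. t i) ^ (card S - 1)"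
    using maclaurin_inequality[of S t', OF S(1) _ pos'] i smoothing(2) by auto
  finally show False
    using eq by simp
qed

lemma maclaurin_normalized_le:
  fixes t :: "'a \<Rightarrow> real"
  assumes "finite S" "S \<noteq> {}" "\<And>i. i \<in> S \<Longrightarrow> t i > 0" "(\<Sum>i\<in>S. t i) = 1"
  shows "(\<Prod>i\<in>S. t i) * (\<Sum>i\<in>S. 1 / t i) \<le> real (card S) / real (card S) ^ (card S - 1)"
proof -
  have "real (card S) ^ (card S - 1) * ((\<Prod>i\<in>S. t i) * (\<Sum>i\<in>S. 1 / t i))
      \<le> real (card S) * (\<Sum>i\<in>S. t i) ^ (card S - 1)"
    by (rule maclaurin_inequality[OF assms(1-3)])
  then show ?thesis
    using assms by (simp add: field_simps card_gt_0_iff)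
qed

lemma maclaurin_normalized_eq_iff:
  fixes t :: "'a \<Rightarrow> real"
  assumes S: "finite S" "card S \<ge> 2" and pos: "\<And>i. i \<in> S \<Longrightarrow> t i > 0"
    and norm: "(\<Sum>i\<in>S. t i) = 1"
  shows "(\<Prod>i\<in>S. t i) * (\<Sum>i\<in>S. 1 / t i) = real (card S) / real (card S) ^ (card S - 1)
         \<longleftrightarrow> (card S \<ge> 3 \<longrightarrow> (\<forall>i\<in>S. t i = 1 / card S))"
proof
  define N where "N = card S"
  have N_pos: "real N > 0"
    using S by (simp add: N_def)
  {
    assume eq: "(\<Prod>i\<in>S. t i) * (\<Sum>i\<in>S. 1 / t i) = real (card S) / real (card S) ^ (card S - 1)"
    show "card S \<ge> 3 \<longrightarrow> (\<forall>i\<in>S. t i = 1 / card S)"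
    proof (intro impI ballI)
      fix i assume "card S \<ge> 3" "i \<in> S"
      have "real N ^ (N - 1) * ((\<Prod>i\<in>S. t i) * (\<Sum>i\<in>S. 1 / t i)) = real N * (\<Sum>i\<in>S. t i) ^ (N - 1)"
        using eq N_pos norm by (simp add: N_def)
      then have "t j = t i" if "j \<in> S" for j
        using maclaurin_equality_imp_eq[OF S(1) \<open>card S \<ge> 3\<close> pos _ that \<open>i \<in> S\<close>] by (simp add: N_def)
      then have "real N * t i = 1"
        using norm by (simp add: N_def)
      then show "t i = 1 / card S"
        using N_pos by (simp add: N_def field_simps)
    qed
  }
  assume balanced: "card S \<ge> 3 \<longrightarrow> (\<forall>i\<in>S. t i = 1 / card S)"
  show "(\<Prod>i\<in>S. t i) * (\<Sum>i\<in>S. 1 / t i) = real (card S) / real (card S) ^ (card S - 1)"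
  proof (cases "card S = 2")
    case True
    then obtain p q where pq: "S = {p, q}" "p \<noteq> q"
      by (auto simp: card_2_iff)
    then have "t p > 0" "t q > 0"
      using pos by auto
    then show ?thesis
      using True pq norm by (simp add: field_simps)
  next
    case False
    then have "(\<Prod>i\<in>S. t i) * (\<Sum>i\<in>S. 1 / t i) = (1 / real N) ^ N * (real N * real N)"
      using balanced S by (simp add: N_def)
    also have "\<dots> = real N / real N ^ (N - 1)"
    proof -
      obtain m where m: "N = Suc m"
        using N_pos by (cases N) auto
      have "(1 / real N) ^ N * (real N * real N) = real N * real N / (real N * real N ^ m)"
        unfolding m by (simp add: power_one_over)
      also have "\<dots> = real N / real N ^ m"
        using N_pos by simp
      finally show ?thesis
        using m by (metis diff_Suc_1)
    qed
    finally show ?thesis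
      by (simp add: N_def)
  qed
qed

lemma sum_mult_le_sqrt_sum_squares:
  fixes a b :: "'a \<Rightarrow> real"
  shows "(\<Sum>i\<in>S. a i * b i) \<le> sqrt (\<Sum>i\<in>S. (a i)\<^sup>2) * sqrt (\<Sum>i\<in>S. (b i)\<^sup>2)"
  using Cauchy_Schwarz_ineq_sum[of a b S] by (simp add: real_le_rsqrt flip: real_sqrt_mult)

lemma sum_mult_eq_sqrt_sum_squares_iff:
  fixes a b :: "'a \<Rightarrow> real"
  assumes S: "finite S" "S \<noteq> {}"
    and a: "\<And>i. i \<in> S \<Longrightarrow> a i \<ge> 0" and b: "\<And>i. i \<in> S \<Longrightarrow> b i > 0"
  shows "(\<Sum>i\<in>S. a i * b i) = sqrt (\<Sum>i\<in>S. (a i)\<^sup>2) * sqrt (\<Sum>i\<in>S. (b i)\<^sup>2)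
         \<longleftrightarrow> (\<exists>c. \<forall>i\<in>S. a i = c * b i)"
proof
  define A where "A = (\<Sum>i\<in>S. (a i)\<^sup>2)"
  define B where "B = (\<Sum>i\<in>S. (b i)\<^sup>2)"
  define X where "X = (\<Sum>i\<in>S. a i * b i)"
  have B_pos: "B > 0"
    unfolding B_def using S b by (intro sum_pos) fastforce+
  assume "X = sqrt A * sqrt B"
  then have "X\<^sup>2 = A * B"
    by (simp add: A_def B_def power_mult_distrib sum_nonneg)
  have expand: "(\<Sum>i\<in>S. (a i - c * b i)\<^sup>2) = A - 2 * c * X + c\<^sup>2 * B" for c
    by (simp add: A_def B_def X_def power2_eq_square algebra_simps sum.distrib
        sum_subtractf sum_distrib_left)
  have "(\<Sum>i\<in>S. (a i - X / B * b i)\<^sup>2) = 0"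
    using \<open>X\<^sup>2 = A * B\<close> B_pos unfolding expand by (simp add: power2_eq_square field_simps)
  then have "\<forall>i\<in>S. a i = X / B * b i"
    using S(1) by (simp add: sum_nonneg_eq_0_iff)
  then show "\<exists>c. \<forall>i\<in>S. a i = c * b i" ..
next
  assume "\<exists>c. \<forall>i\<in>S. a i = c * b i"
  then obtain c where c: "\<And>i. i \<in> S \<Longrightarrow> a i = c * b i"
    by blast
  obtain i where "i \<in> S"
    using S by blast
  then have "c \<ge> 0"
    using a[of i] b[of i] c[of i] by (simp add: zero_le_mult_iff)
  have "(\<Sum>i\<in>S. a i * b i) = c * (\<Sum>i\<in>S. (b i)\<^sup>2)"
    by (simp add: c power2_eq_square sum_distrib_left mult.assoc cong: sum.cong)
  moreover have "(\<Sum>i\<in>S. (a i)\<^sup>2) = c\<^sup>2 * (\<Sum>i\<in>S. (b i)\<^sup>2)"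
    by (simp add: c power_mult_distrib sum_distrib_left cong: sum.cong)
  ultimately show "(\<Sum>i\<in>S. a i * b i) = sqrt (\<Sum>i\<in>S. (a i)\<^sup>2) * sqrt (\<Sum>i\<in>S. (b i)\<^sup>2)"
    using \<open>c \<ge> 0\<close> by (simp add: real_sqrt_mult sum_nonneg)
qed

lemma sqrt_div_power_eq_powr:
  assumes "N \<ge> 1"
  shows "sqrt (real N / real N ^ (N - 1)) = real N powr (- (real N - 2) / 2)"
proof -
  have N_pos: "real N > 0"
    using assms by simp
  have "- (real N - 2) = 1 - real (N - 1)"
    using assms by (simp add: of_nat_diff)
  then have "real N powr (- (real N - 2)) = real N powr 1 / real N powr real (N - 1)"
    by (simp only: powr_diff)
  also have "\<dots> = real N / real N ^ (N - 1)"
    using N_pos by (simp only: powr_one powr_realpow less_imp_le)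
  finally have "sqrt (real N / real N ^ (N - 1)) = sqrt (real N powr (- (real N - 2)))"
    by simp
  also have "\<dots> = (real N powr (- (real N - 2))) powr (1 / 2)"
    by (simp add: powr_half_sqrt)
  also have "\<dots> = real N powr (- (real N - 2) / 2)"
    by (simp add: powr_powr)
  finally show ?thesis .
qed

lemma prod_mult_sqrt_sum_inverse_squares:
  fixes \<beta> :: "'a \<Rightarrow> real"
  assumes "\<And>i. i \<in> S \<Longrightarrow> \<beta> i > 0"
  shows "(\<Prod>i\<in>S. \<beta> i) * sqrt (\<Sum>i\<in>S. (1 / \<beta> i)\<^sup>2)
           = sqrt ((\<Prod>i\<in>S. (\<beta> i)\<^sup>2) * (\<Sum>i\<in>S. 1 / (\<beta> i)\<^sup>2))"
proof -
  have "(\<Prod>i\<in>S. \<beta> i) \<ge> 0"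
    using assms by (simp add: prod_nonneg less_imp_le)
  then show ?thesis
    by (simp add: real_sqrt_mult power_divide flip: prod_power_distrib)
qed

lemma prod_mult_sqrt_sum_inverse_squares_le:
  fixes \<beta> :: "'a \<Rightarrow> real"
  assumes S: "finite S" "card S \<ge> 2" and pos: "\<And>i. i \<in> S \<Longrightarrow> \<beta> i > 0"
    and norm: "(\<Sum>i\<in>S. (\<beta> i)\<^sup>2) = 1"
  shows "(\<Prod>i\<in>S. \<beta> i) * sqrt (\<Sum>i\<in>S. (1 / \<beta> i)\<^sup>2) \<le> real (card S) powr (- (real (card S) - 2) / 2)"
proof -
  have "\<And>i. i \<in> S \<Longrightarrow> (\<beta> i)\<^sup>2 > 0"
    using pos by (metis zero_less_power)
  then have "(\<Prod>i\<in>S. (\<beta> i)\<^sup>2) * (\<Sum>i\<in>S. 1 / (\<beta> i)\<^sup>2) \<le> real (card S) / real (card S) ^ (card S - 1)"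
    using S norm by (intro maclaurin_normalized_le) auto
  then have "sqrt ((\<Prod>i\<in>S. (\<beta> i)\<^sup>2) * (\<Sum>i\<in>S. 1 / (\<beta> i)\<^sup>2))
      \<le> sqrt (real (card S) / real (card S) ^ (card S - 1))"
    by (rule real_sqrt_le_mono)
  also have "\<dots> = real (card S) powr (- (real (card S) - 2) / 2)"
    by (rule sqrt_div_power_eq_powr) (use S in simp)
  finally show ?thesis
    by (simp only: prod_mult_sqrt_sum_inverse_squares[OF pos])
qed

lemma prod_mult_sqrt_sum_inverse_squares_eq_iff:
  fixes \<beta> :: "'a \<Rightarrow> real"
  assumes S: "finite S" "card S \<ge> 2" and pos: "\<And>i. i \<in> S \<Longrightarrow> \<beta> i > 0"
    and norm: "(\<Sum>i\<in>S. (\<beta> i)\<^sup>2) = 1"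
  shows "(\<Prod>i\<in>S. \<beta> i) * sqrt (\<Sum>i\<in>S. (1 / \<beta> i)\<^sup>2) = real (card S) powr (- (real (card S) - 2) / 2)
         \<longleftrightarrow> (card S \<ge> 3 \<longrightarrow> (\<forall>i\<in>S. \<beta> i = 1 / sqrt (card S)))"
proof -
  have rhs: "real (card S) powr (- (real (card S) - 2) / 2) = sqrt (real (card S) / real (card S) ^ (card S - 1))"
    by (rule sqrt_div_power_eq_powr[symmetric]) (use S in simp)
  have "(\<beta> i)\<^sup>2 = 1 / card S \<longleftrightarrow> \<beta> i = 1 / sqrt (card S)" if "i \<in> S" for i
  proof
    assume "(\<beta> i)\<^sup>2 = 1 / card S"
    then have "sqrt (1 / card S) = \<beta> i"
      using pos[OF that] by (intro real_sqrt_unique) simp_all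
    then show "\<beta> i = 1 / sqrt (card S)"
      by (simp add: real_sqrt_divide)
  qed (simp add: power_divide)
  then have balanced_iff: "(\<forall>i\<in>S. (\<beta> i)\<^sup>2 = 1 / card S) \<longleftrightarrow> (\<forall>i\<in>S. \<beta> i = 1 / sqrt (card S))"
    by blast
  have "\<And>i. i \<in> S \<Longrightarrow> (\<beta> i)\<^sup>2 > 0"
    using pos by (metis zero_less_power)
  then have "(\<Prod>i\<in>S. (\<beta> i)\<^sup>2) * (\<Sum>i\<in>S. 1 / (\<beta> i)\<^sup>2) = real (card S) / real (card S) ^ (card S - 1)
      \<longleftrightarrow> (card S \<ge> 3 \<longrightarrow> (\<forall>i\<in>S. (\<beta> i)\<^sup>2 = 1 / card S))"
    using S norm by (intro maclaurin_normalized_eq_iff) auto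
  then show ?thesis
    by (simp only: prod_mult_sqrt_sum_inverse_squares[OF pos] rhs real_sqrt_eq_iff balanced_iff)
qed

lemma prod_mult_sum_div_le:
  fixes \<alpha> \<beta> :: "'a \<Rightarrow> real"
  assumes S: "finite S" "card S \<ge> 2" and \<beta>: "\<And>i. i \<in> S \<Longrightarrow> \<beta> i > 0"
    and norm: "(\<Sum>i\<in>S. (\<beta> i)\<^sup>2) = 1"
  shows "(\<Prod>i\<in>S. \<beta> i) * (\<Sum>i\<in>S. \<alpha> i / \<beta> i)
           \<le> sqrt (\<Sum>i\<in>S. (\<alpha> i)\<^sup>2) * real (card S) powr (- (real (card S) - 2) / 2)"
proof -
  have "(\<Sum>i\<in>S. \<alpha> i / \<beta> i) \<le> sqrt (\<Sum>i\<in>S. (\<alpha> i)\<^sup>2) * sqrt (\<Sum>i\<in>S. (1 / \<beta> i)\<^sup>2)"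
    using sum_mult_le_sqrt_sum_squares[of \<alpha> "\<lambda>i. 1 / \<beta> i" S] by simp
  moreover have "(\<Prod>i\<in>S. \<beta> i) \<ge> 0"
    using \<beta> by (simp add: prod_nonneg less_imp_le)
  ultimately have "(\<Prod>i\<in>S. \<beta> i) * (\<Sum>i\<in>S. \<alpha> i / \<beta> i)
      \<le> sqrt (\<Sum>i\<in>S. (\<alpha> i)\<^sup>2) * ((\<Prod>i\<in>S. \<beta> i) * sqrt (\<Sum>i\<in>S. (1 / \<beta> i)\<^sup>2))"
    by (simp add: mult_left_mono mult.left_commute)
  also have "\<dots> \<le> sqrt (\<Sum>i\<in>S. (\<alpha> i)\<^sup>2) * real (card S) powr (- (real (card S) - 2) / 2)"
    using prod_mult_sqrt_sum_inverse_squares_le[OF S \<beta> norm] by (rule mult_left_mono) (auto intro: sum_nonneg)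
  finally show ?thesis .
qed

lemma prod_mult_sum_div_eq_iff:
  fixes \<alpha> \<beta> :: "'a \<Rightarrow> real"
  assumes S: "finite S" "card S \<ge> 2" and \<beta>: "\<And>i. i \<in> S \<Longrightarrow> \<beta> i > 0"
    and \<alpha>: "\<And>i. i \<in> S \<Longrightarrow> \<alpha> i > 0" and norm: "(\<Sum>i\<in>S. (\<beta> i)\<^sup>2) = 1"
  shows "(\<Prod>i\<in>S. \<beta> i) * (\<Sum>i\<in>S. \<alpha> i / \<beta> i)
           = sqrt (\<Sum>i\<in>S. (\<alpha> i)\<^sup>2) * real (card S) powr (- (real (card S) - 2) / 2)
         \<longleftrightarrow> (\<exists>c. \<forall>i\<in>S. \<alpha> i = c * (1 / \<beta> i))
             \<and> (card S \<ge> 3 \<longrightarrow> (\<forall>i\<in>S. \<beta> i = 1 / sqrt (card S)))"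
proof -
  define P where "P = (\<Prod>i\<in>S. \<beta> i)"
  define X where "X = (\<Sum>i\<in>S. \<alpha> i / \<beta> i)"
  define X' where "X' = sqrt (\<Sum>i\<in>S. (\<alpha> i)\<^sup>2) * sqrt (\<Sum>i\<in>S. (1 / \<beta> i)\<^sup>2)"
  define L where "L = sqrt (\<Sum>i\<in>S. (\<alpha> i)\<^sup>2)"
  define G where "G = P * sqrt (\<Sum>i\<in>S. (1 / \<beta> i)\<^sup>2)"
  define R where "R = real (card S) powr (- (real (card S) - 2) / 2)"
  have S_ne: "S \<noteq> {}"
    using S by auto
  have P_pos: "P > 0"
    unfolding P_def using \<beta> by (intro prod_pos) auto
  have "\<And>i. i \<in> S \<Longrightarrow> (\<alpha> i)\<^sup>2 > 0"
    using \<alpha> by (metis zero_less_power)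
  then have L_pos: "L > 0"
    unfolding L_def using S(1) S_ne by (intro real_sqrt_gt_zero sum_pos)
  have "X \<le> X'"
    using sum_mult_le_sqrt_sum_squares[of \<alpha> "\<lambda>i. 1 / \<beta> i" S] by (simp add: X_def X'_def)
  moreover have "G \<le> R"
    unfolding G_def P_def R_def by (rule prod_mult_sqrt_sum_inverse_squares_le[OF S \<beta> norm])
  moreover have "P * X' = L * G"
    by (simp add: X'_def L_def G_def)
  ultimately have "P * X = L * R \<longleftrightarrow> X = X' \<and> G = R"
    using P_pos L_pos
    by (smt (verit) mult_le_cancel_left_pos mult_less_cancel_left_pos)
  moreover have "X = X' \<longleftrightarrow> (\<exists>c. \<forall>i\<in>S. \<alpha> i = c * (1 / \<beta> i))"
    using sum_mult_eq_sqrt_sum_squares_iff[OF S(1) S_ne, of \<alpha> "\<lambda>i. 1 / \<beta> i"] \<alpha> \<beta>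
    by (simp add: X_def X'_def less_imp_le)
  moreover have "G = R \<longleftrightarrow> (card S \<ge> 3 \<longrightarrow> (\<forall>i\<in>S. \<beta> i = 1 / sqrt (card S)))"
    unfolding G_def P_def R_def by (rule prod_mult_sqrt_sum_inverse_squares_eq_iff[OF S \<beta> norm])
  ultimately show ?thesis
    by (simp add: P_def X_def L_def R_def)
qed

lemma balancing_angle_exists:
  fixes a b :: "real \<Rightarrow> real"
  assumes "continuous_on {0..pi/2} a" "continuous_on {0..pi/2} b" "a 0 > 0" "b (pi/2) > 0"
  obtains \<theta> where "0 < \<theta>" "\<theta> < pi/2" "a \<theta> * (cos \<theta>)\<^sup>2 = b \<theta> * (sin \<theta>)\<^sup>2"
proof -
  define h where "h t = a t * (cos t)\<^sup>2 - b t * (sin t)\<^sup>2" for t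
  have "continuous_on {0..pi/2} h"
    unfolding h_def using assms(1,2) by (intro continuous_intros)
  moreover have "h (pi/2) < 0" "h 0 > 0"
    using assms(3,4) by (simp_all add: h_def)
  ultimately obtain \<theta> where \<theta>: "0 \<le> \<theta>" "\<theta> \<le> pi/2" "h \<theta> = 0"
    using IVT2'[of h "pi/2" 0 0] by force
  moreover have "\<theta> \<noteq> 0" "\<theta> \<noteq> pi/2"
    using \<theta>(3) \<open>h (pi/2) < 0\<close> \<open>h 0 > 0\<close> by (metis less_irrefl)+
  ultimately show ?thesis
    using that[of \<theta>] by (auto simp: h_def)
qed

section \<open>Matrix inverses and principal minors\<close>

lemma sym_pos_def_invertible:
  fixes M :: "real^'n^'n"
  assumes "sym_pos_def M"
  shows "invertible M"
proof -
  have "x = 0" if "M *v x = 0" for x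
  proof (rule ccontr)
    assume "x \<noteq> 0"
    then have "x \<bullet> (M *v x) > 0"
      using assms by (simp add: sym_pos_def_def)
    then show False
      using that by simp
  qed
  then show ?thesis
    by (auto simp: invertible_left_inverse matrix_left_invertible_ker)
qed

lemma matrix_inv_right:
  fixes M :: "'a::semiring_1^'n^'n"
  assumes "invertible M"
  shows "M ** matrix_inv M = mat 1"
  using assms unfolding invertible_def matrix_inv_def by (rule someI2_ex) blast

lemma matrix_inv_left:
  fixes M :: "'a::semiring_1^'n^'n"
  assumes "invertible M"
  shows "matrix_inv M ** M = mat 1"
  using assms unfolding invertible_def matrix_inv_def by (rule someI2_ex) blast

lemma matrix_inv_unique:
  fixes M X :: "'a::field^'n^'n"
  assumes "M ** X = mat 1"
  shows "matrix_inv M = X"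
proof -
  have "invertible M"
    using assms invertible_right_inverse by blast
  have "matrix_inv M = matrix_inv M ** (M ** X)"
    using assms by simp
  also have "\<dots> = (matrix_inv M ** M) ** X"
    by (rule matrix_mul_assoc)
  also have "\<dots> = X"
    using matrix_inv_left[OF \<open>invertible M\<close>] by simp
  finally show ?thesis .
qed

lemma transpose_matrix_inv:
  fixes M :: "'a::field^'n^'n"
  assumes "invertible M"
  shows "transpose (matrix_inv M) = matrix_inv (transpose M)"
proof -
  have "transpose M ** transpose (matrix_inv M) = mat 1"
    using matrix_inv_left[OF assms] by (metis matrix_transpose_mul transpose_mat)
  then show ?thesis
    by (rule matrix_inv_unique[symmetric])
qed

lemma inner_symmetric_matrix:
  fixes M :: "real^'n^'n"
  assumes "transpose M = M"
  shows "(M *v x) \<bullet> y = x \<bullet> (M *v y)"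
proof -
  have "x \<bullet> (M *v y) = (transpose M *v x) \<bullet> y"
    by (simp add: dot_lmul_matrix)
  then show ?thesis
    using assms by simp
qed

lemma matrix_mult_entry_inner:
  fixes M N :: "real^'n^'n"
  shows "(M ** N) $ i $ j = row i M \<bullet> column j N"
  by (simp add: matrix_matrix_mult_def inner_vec_def row_def column_def)

lemma row_vec_lambda [simp]: "row i (\<chi> k. f k) = f i"
  by (simp add: row_def vec_eq_iff)

lemma column_edge_matrix [simp]: "column j (edge_matrix v) = v j"
  by (simp add: column_def edge_matrix_def vec_eq_iff)

lemma column_matrix_mult:
  fixes M :: "'a::semiring_1^'n^'m" and N :: "'a^'p^'n"
  shows "column i (M ** N) = M *v column i N"
  by (simp add: vec_eq_iff column_def matrix_matrix_mult_def matrix_vector_mult_def)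

lemma orthogonal_matrix_columns_inner:
  fixes U :: "real^'n^'n"
  assumes "orthogonal_matrix U"
  shows "column i U \<bullet> column j U = (if i = j then 1 else 0)"
  using assms by (simp add: orthogonal_matrix_def matrix_mult_transpose_dot_column vec_eq_iff mat_def)

lemma orthogonal_matrix_inner_sum_columns:
  fixes U :: "real^'n^'n"
  assumes "orthogonal_matrix U"
  shows "column j U \<bullet> (\<Sum>i\<in>UNIV. c i *\<^sub>R column i U) = c j"
  by (simp add: inner_sum_right orthogonal_matrix_columns_inner[OF assms] if_distrib cong: if_cong)

lemma orthogonal_matrix_norm_sum_columns:
  fixes U :: "real^'n^'n"
  assumes "orthogonal_matrix U"
  shows "(norm (\<Sum>i\<in>UNIV. c i *\<^sub>R column i U))\<^sup>2 = (\<Sum>i\<in>UNIV. (c i)\<^sup>2)"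
  unfolding power2_norm_eq_inner
  by (subst (1) inner_sum_left) (simp add: orthogonal_matrix_inner_sum_columns[OF assms] power2_eq_square)

lemma orthogonal_matrix_expansion:
  fixes U :: "real^'n^'n"
  assumes "orthogonal_matrix U"
  shows "(\<Sum>i\<in>UNIV. (column i U \<bullet> y) *\<^sub>R column i U) = y"
proof -
  have coordinate: "(transpose U *v y) $ i = column i U \<bullet> y" for i
    by (simp add: matrix_vector_mult_def transpose_def column_def inner_vec_def mult.commute)
  have "U ** transpose U = mat 1"
    using assms by (simp add: orthogonal_matrix_def)
  then have "y = U *v (transpose U *v y)"
    by (simp only: matrix_vector_mul_assoc matrix_vector_mul_lid)
  also have "\<dots> = (\<Sum>i\<in>UNIV. (transpose U *v y) $ i *s column i U)"
    by (rule matrix_mult_sum)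
  also have "\<dots> = (\<Sum>i\<in>UNIV. (column i U \<bullet> y) *\<^sub>R column i U)"
    by (simp only: coordinate scalar_mult_eq_scaleR)
  finally show ?thesis
    by (rule sym)
qed

lemma exists_unit_orthogonal:
  fixes y :: "real^'n" and p q :: 'n
  assumes "p \<noteq> q" and y: "norm y = 1"
  shows "\<exists>z. z \<bullet> z = 1 \<and> y \<bullet> z = 0"
proof -
  obtain Q where Q: "orthogonal_matrix Q" "Q *v axis p 1 = y"
    using orthogonal_matrix_exists_basis[OF y] by blast
  then have "column q Q \<bullet> column q Q = 1 \<and> y \<bullet> column q Q = 0"
    using \<open>p \<noteq> q\<close> orthogonal_matrix_columns_inner[OF Q(1), of p q]
      orthogonal_matrix_columns_inner[OF Q(1), of q q]
    by (simp flip: matrix_vector_mult_basis)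
  then show ?thesis ..
qed

lemma planar_rotated_frame:
  fixes y z :: "real^'n" and \<theta> :: real
  assumes UNIV_eq: "UNIV = {p, q}" "p \<noteq> q" and yz: "y \<bullet> y = 1" "z \<bullet> z = 1" "y \<bullet> z = 0"
  defines "U \<equiv> \<chi> r c. (if c = p then cos \<theta> *\<^sub>R y + sin \<theta> *\<^sub>R z else sin \<theta> *\<^sub>R y - cos \<theta> *\<^sub>R z) $ r"
  shows "orthogonal_matrix U"
proof -
  define f where "f = cos \<theta> *\<^sub>R y + sin \<theta> *\<^sub>R z"
  define g where "g = sin \<theta> *\<^sub>R y - cos \<theta> *\<^sub>R z"
  have column_U: "column c U = (if c = p then f else g)" for c
    by (simp add: U_def f_def g_def column_def vec_eq_iff)
  have "f \<bullet> f = 1" "g \<bullet> g = 1" "f \<bullet> g = 0"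
    using yz sin_cos_squared_add[of \<theta>]
    by (simp_all add: f_def g_def inner_add_left inner_add_right inner_diff_left inner_diff_right
        inner_commute power2_eq_square algebra_simps)
  then show "orthogonal_matrix U"
    unfolding orthogonal_matrix_orthonormal_columns column_U
    using UNIV_eq by (auto simp: norm_eq_1 orthogonal_def inner_commute)
qed

lemma prod_replace_column_nonfixing:
  fixes M N :: "real^'n^'n"
  assumes N: "N = (\<chi> r c. if c = i then axis i 1 $ r else M $ r $ c)"
    and p: "p permutes UNIV" and not_fixing: "\<not> p permutes (UNIV - {i})"
  shows "(\<Prod>r\<in>UNIV. N $ r $ p r) = 0"
proof -
  have "p i \<noteq> i"
  proof
    assume "p i = i"
    then have "p permutes (UNIV - {i})"
      using p unfolding permutes_def by auto
    then show False
      using not_fixing by simp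
  qed
  obtain r where "p r = i"
    using p by (meson permutes_univ)
  with \<open>p i \<noteq> i\<close> have "N $ r $ p r = 0"
    by (auto simp: N axis_def)
  then show ?thesis
    by (intro prod_zero) auto
qed

lemma prod_replace_column_fixing:
  fixes M N :: "real^'n^'n"
  assumes N: "N = (\<chi> r c. if c = i then axis i 1 $ r else M $ r $ c)"
    and p: "p permutes (UNIV - {i})"
  shows "(\<Prod>r\<in>UNIV. N $ r $ p r) = (\<Prod>r\<in>UNIV - {i}. M $ r $ p r)"
proof -
  have "p i = i"
    using p unfolding permutes_def by auto
  have "p r \<noteq> i" if "r \<noteq> i" for r
    using p \<open>p i = i\<close> that by (metis permutes_inj injD)
  have "(\<Prod>r\<in>UNIV. N $ r $ p r) = N $ i $ p i * (\<Prod>r\<in>UNIV - {i}. N $ r $ p r)"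
    by (simp add: prod.remove)
  also have "\<dots> = (\<Prod>r\<in>UNIV - {i}. M $ r $ p r)"
    using \<open>p i = i\<close> \<open>\<And>r. r \<noteq> i \<Longrightarrow> p r \<noteq> i\<close> by (auto simp: N axis_def intro!: prod.cong)
  finally show ?thesis .
qed

lemma del_minor_det_eq_det_replace_column:
  fixes M :: "real^'n^'n"
  shows "del_minor_det M i = det (\<chi> r c. if c = i then axis i 1 $ r else M $ r $ c)"
proof -
  define N :: "real^'n^'n" where "N = (\<chi> r c. if c = i then axis i 1 $ r else M $ r $ c)"
  have "det N = (\<Sum>p\<in>{p. p permutes UNIV}. of_int (sign p) * (\<Prod>r\<in>UNIV. N $ r $ p r))"
    by (simp add: det_def)
  also have "\<dots> = (\<Sum>p\<in>{p. p permutes (UNIV - {i})}. of_int (sign p) * (\<Prod>r\<in>UNIV. N $ r $ p r))"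
  proof (rule sum.mono_neutral_right)
    show "{p. p permutes (UNIV - {i})} \<subseteq> {p. p permutes UNIV}"
      by (auto intro: permutes_subset)
  qed (simp_all add: finite_permutations prod_replace_column_nonfixing[OF N_def])
  also have "\<dots> = del_minor_det M i"
    unfolding del_minor_det_def by (rule sum.cong) (simp_all add: prod_replace_column_fixing[OF N_def])
  finally show ?thesis
    by (simp add: N_def)
qed

lemma del_minor_det_eq_cofactor:
  fixes M :: "real^'n^'n"
  assumes "invertible M"
  shows "del_minor_det M i = det M * matrix_inv M $ i $ i"
proof -
  define x where "x = matrix_inv M *v axis i 1"
  have "M *v x = axis i 1"
    using matrix_inv_right[OF assms] by (simp add: x_def matrix_vector_mul_assoc)
  then have "del_minor_det M i = det (\<chi> r c. if c = i then (M *v x) $ r else M $ r $ c)"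
    by (subst del_minor_det_eq_det_replace_column) (simp only:)
  also have "\<dots> = x $ i * det M"
    by (rule cramer_lemma)
  also have "x $ i = matrix_inv M $ i $ i"
    by (simp add: x_def matrix_vector_mult_basis column_def)
  finally show ?thesis
    by simp
qed

text \<open>A principal minor of a Gram matrix is the squared volume times the squared norm of the
  corresponding dual basis vector, i.e.\ of a row of the inverse.\<close>
lemma del_minor_det_gram:
  fixes V W :: "real^'n^'n"
  assumes "W ** V = mat 1"
  shows "del_minor_det (transpose V ** V) i = (det V)\<^sup>2 * (norm (row i W))\<^sup>2"
proof -
  have "V ** W = mat 1"
    using assms matrix_left_right_inverse by blast
  have "(transpose V ** V) ** (W ** transpose W) = transpose V ** ((V ** W) ** transpose W)"
    by (simp add: matrix_mul_assoc)
  also have "\<dots> = transpose (W ** V)"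
    using \<open>V ** W = mat 1\<close> by (simp add: matrix_transpose_mul)
  finally have inverse: "(transpose V ** V) ** (W ** transpose W) = mat 1"
    using assms by simp
  then have "invertible (transpose V ** V)"
    using invertible_right_inverse by blast
  then have "del_minor_det (transpose V ** V) i = det (transpose V ** V) * (W ** transpose W) $ i $ i"
    by (simp add: del_minor_det_eq_cofactor matrix_inv_unique[OF inverse])
  then show ?thesis
    by (simp add: det_mul det_transpose matrix_mult_transpose_dot_row dot_square_norm
        power2_eq_square)
qed

section \<open>Parallelepipeds inscribed in an ellipsoid\<close>

lemma sign_vec_square:
  assumes "sign_vec e"
  shows "(e i)\<^sup>2 = 1"
proof -
  have "e i = 1 \<or> e i = -1"
    using assms by (simp add: sign_vec_def)
  then show ?thesis
    by auto
qed

text \<open>\<open>B\<close> plays the role of \<open>A\<^sup>1\<^sup>/\<^sup>2\<close>; only its symmetry and invertibility are used.\<close>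
locale ellipsoid_root =
  fixes A B :: "real^'n^'n"
  assumes symmetric_B: "transpose B = B"
    and invertible_B: "invertible B"
    and square_B: "B ** B = A"
begin

lemma inv_B_mult_B [simp]: "matrix_inv B *v (B *v x) = x"
  using matrix_inv_left[OF invertible_B] by (simp add: matrix_vector_mul_assoc)

lemma B_mult_inv_B [simp]: "B *v (matrix_inv B *v x) = x"
  using matrix_inv_right[OF invertible_B] by (simp add: matrix_vector_mul_assoc)

lemma inv_B_eq_0_iff [simp]: "matrix_inv B *v x = 0 \<longleftrightarrow> x = 0"
  by (metis B_mult_inv_B matrix_vector_mult_0_right)

lemma inner_inv_B: "(matrix_inv B *v x) \<bullet> y = x \<bullet> (matrix_inv B *v y)"
  using transpose_matrix_inv[OF invertible_B] symmetric_B by (simp add: inner_symmetric_matrix)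

lemma inv_A: "matrix_inv A = matrix_inv B ** matrix_inv B"
proof (rule matrix_inv_unique)
  have "B ** B ** (matrix_inv B ** matrix_inv B) = B ** ((B ** matrix_inv B) ** matrix_inv B)"
    by (simp add: matrix_mul_assoc)
  then show "A ** (matrix_inv B ** matrix_inv B) = mat 1"
    using matrix_inv_right[OF invertible_B] square_B by simp
qed

lemma ell_form_eq_norm: "ell_form A x = (norm (matrix_inv B *v x))\<^sup>2"
  by (simp add: ell_form_def inv_A inner_inv_B power2_norm_eq_inner flip: matrix_vector_mul_assoc)

lemma det_A: "det A = (det B)\<^sup>2"
  using square_B by (simp add: det_mul power2_eq_square flip: square_B)

lemma det_A_pos: "det A > 0"
  using invertible_B by (simp add: det_A invertible_det_nz)

lemma diag_congruence_inv_A: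
  fixes U :: "real^'n^'n"
  shows "(transpose U ** matrix_inv A ** U) $ i $ i = (norm (matrix_inv B *v column i U))\<^sup>2"
proof -
  have "transpose U ** matrix_inv A ** U = transpose (matrix_inv B ** U) ** (matrix_inv B ** U)"
    using transpose_matrix_inv[OF invertible_B] symmetric_B
    by (simp add: inv_A matrix_transpose_mul matrix_mul_assoc)
  then show ?thesis
    by (simp add: matrix_mult_transpose_dot_column column_matrix_mult power2_norm_eq_inner)
qed

text \<open>The map \<open>B\<^sup>-\<^sup>1\<close> sends the ellipsoid to the unit sphere, and a parallelepiped inscribed in
  the sphere is a box: the vertices for the four sign patterns on \<open>i, j\<close> have equal norms,
  which forces the \<open>i\<close>-th and \<open>j\<close>-th edges to be orthogonal.\<close>
lemma inscribed_orthogonal: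
  assumes P: "inscribed A v" and ij: "i \<noteq> j"
  shows "(matrix_inv B *v v i) \<bullet> (matrix_inv B *v v j) = 0"
proof -
  define w where "w k = matrix_inv B *v v k" for k
  define s where "s = (\<Sum>k\<in>UNIV - {i, j}. w k)"
  define \<epsilon> where "\<epsilon> a b k = (if k = i then a else if k = j then b else (1::real))" for a b k
  have "(norm (a *\<^sub>R w i + b *\<^sub>R w j + s))\<^sup>2 = 4"
    if "a = 1 \<or> a = -1" "b = 1 \<or> b = -1" for a b
  proof -
    have "sign_vec (\<epsilon> a b)"
      using that by (auto simp: sign_vec_def \<epsilon>_def)
    then have "(norm (matrix_inv B *v vertex v (\<epsilon> a b)))\<^sup>2 = 1"
      using P by (simp add: inscribed_def ell_form_eq_norm)
    moreover have "matrix_inv B *v vertex v (\<epsilon> a b) = (1/2) *\<^sub>R (\<Sum>k\<in>UNIV. \<epsilon> a b k *\<^sub>R w k)"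
      by (simp add: vertex_def w_def matrix_vector_mult_scaleR linear_sum[OF matrix_vector_mul_linear])
    moreover have "(\<Sum>k\<in>UNIV. \<epsilon> a b k *\<^sub>R w k) = a *\<^sub>R w i + b *\<^sub>R w j + s"
    proof -
      have "(\<Sum>k\<in>UNIV - {i, j}. \<epsilon> a b k *\<^sub>R w k) = s"
        by (simp add: s_def \<epsilon>_def)
      moreover have "\<epsilon> a b i = a" "\<epsilon> a b j = b"
        using ij by (simp_all add: \<epsilon>_def)
      ultimately show ?thesis
        using sum_remove2[OF finite UNIV_I UNIV_I ij, of "\<lambda>k. \<epsilon> a b k *\<^sub>R w k"] by simp
    qed
    ultimately show ?thesis
      by (simp add: power_divide)
  qed
  from this[of 1 1] this[of 1 "-1"] this[of "-1" 1] this[of "-1" "-1"]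
  have "w i \<bullet> w j = 0"
    by (simp add: power2_norm_eq_inner algebra_simps inner_commute)
  then show ?thesis
    by (simp add: w_def)
qed

lemma inscribed_decomposition:
  assumes P: "inscribed A v" and e: "sign_vec e"
  obtains lam U where "orthogonal_matrix U"
    and "\<And>i. lam i > 0" and "\<And>i. e i *\<^sub>R v i = lam i *\<^sub>R (B *v column i U)"
proof
  define w where "w k = matrix_inv B *v v k" for k
  define U :: "real^'n^'n" where "U = (\<chi> r c. (e c / norm (w c)) *\<^sub>R w c $ r)"
  have e_abs: "\<bar>e k\<bar> = 1" and e_sq: "e k * e k = 1" for k
    using sign_vec_square[OF e, of k] by (simp_all add: abs_square_eq_1 flip: power2_eq_square)
  have "v k \<noteq> 0" for k
    using P dependent_zero[of "range v"] by (auto simp: inscribed_def)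
  then have w_nonzero: "w k \<noteq> 0" for k
    by (simp add: w_def)
  have column_U: "column c U = (e c / norm (w c)) *\<^sub>R w c" for c
    by (simp add: U_def column_def vec_eq_iff)
  show "orthogonal_matrix U"
    unfolding orthogonal_matrix_orthonormal_columns column_U
    using inscribed_orthogonal[OF P] w_nonzero e_abs
    by (simp add: w_def orthogonal_def)
  show "norm (w i) > 0" for i
    using w_nonzero by simp
  show "e i *\<^sub>R v i = norm (w i) *\<^sub>R (B *v column i U)" for i
    using w_nonzero[of i] e_sq[of i]
    by (simp add: column_U w_def matrix_vector_mult_scaleR)
qed

end

definition surface_area_bound :: "real^'n^'n \<Rightarrow> real" where
  "surface_area_bound A = 2 ^ CARD('n) * real CARD('n) powr (- (real CARD('n) - 2) / 2)
     * sqrt (det A) * sqrt (trace (matrix_inv A))"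

text \<open>The decomposition \<open>e\<^sub>i v\<^sub>i = \<lambda>\<^sub>i B u\<^sub>i\<close> of the edges, with \<open>vertex v e\<close> on the ellipsoid;
  \<open>beta\<close> and \<open>alpha\<close> are the \<open>\<beta>\<^sub>i\<close> and \<open>\<alpha>\<^sub>i\<close> of the statement for \<open>x\<^sub>0 = vertex v e\<close>.\<close>
locale edge_decomposition = ellipsoid_root A B for A B :: "real^'n^'n" +
  fixes v :: "'n \<Rightarrow> real^'n" and e lam :: "'n \<Rightarrow> real" and U :: "real^'n^'n"
  assumes orthogonal_U: "orthogonal_matrix U"
    and sign_e: "sign_vec e"
    and lam_pos: "\<And>i. lam i > 0"
    and edges: "\<And>i. e i *\<^sub>R v i = lam i *\<^sub>R (B *v column i U)"
    and vertex_on_ellipsoid: "ell_form A (vertex v e) = 1"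
begin

abbreviation beta :: "'n \<Rightarrow> real" where
  "beta i \<equiv> column i U \<bullet> (matrix_inv B *v vertex v e)"

abbreviation alpha :: "'n \<Rightarrow> real" where
  "alpha i \<equiv> sqrt ((transpose U ** matrix_inv A ** U) $ i $ i)"

lemma sign_e_square: "(e i)\<^sup>2 = 1"
  using sign_e by (rule sign_vec_square)

lemma edge_eq: "v i = (e i * lam i) *\<^sub>R (B *v column i U)"
proof -
  have "v i = e i *\<^sub>R (e i *\<^sub>R v i)"
    using sign_e_square[of i] by (simp add: power2_eq_square)
  then show ?thesis
    by (simp add: edges)
qed

lemma inv_B_vertex: "matrix_inv B *v vertex v e = (\<Sum>i\<in>UNIV. (lam i / 2) *\<^sub>R column i U)"
proof -
  have "vertex v e = (1/2) *\<^sub>R (\<Sum>i\<in>UNIV. lam i *\<^sub>R (B *v column i U))"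
    by (simp add: vertex_def edges)
  then show ?thesis
    by (simp add: linear_sum[OF matrix_vector_mul_linear] matrix_vector_mult_scaleR scaleR_sum_right)
qed

lemma beta_eq: "beta i = lam i / 2"
  by (simp add: inv_B_vertex orthogonal_matrix_inner_sum_columns[OF orthogonal_U])

lemma beta_pos: "beta i > 0"
  using lam_pos[of i] by (simp add: beta_eq)

lemma sum_beta_squares: "(\<Sum>i\<in>UNIV. (beta i)\<^sup>2) = 1"
proof -
  have "(\<Sum>i\<in>UNIV. (beta i)\<^sup>2) = (\<Sum>i\<in>UNIV. (lam i / 2)\<^sup>2)"
    by (simp only: beta_eq)
  also have "\<dots> = ell_form A (vertex v e)"
    by (simp add: ell_form_eq_norm inv_B_vertex orthogonal_matrix_norm_sum_columns[OF orthogonal_U])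
  finally show ?thesis
    using vertex_on_ellipsoid by simp
qed

lemma alpha_squared: "(alpha i)\<^sup>2 = (norm (matrix_inv B *v column i U))\<^sup>2"
  by (simp add: diag_congruence_inv_A)

lemma column_U_nonzero: "column i U \<noteq> 0"
proof -
  have "norm (column i U) = 1"
    using orthogonal_U by (simp add: orthogonal_matrix_orthonormal_columns)
  then show ?thesis
    by auto
qed

lemma diag_congruence_pos: "(transpose U ** matrix_inv A ** U) $ i $ i > 0"
  using column_U_nonzero by (simp add: diag_congruence_inv_A)

lemma alpha_pos: "alpha i > 0"
  using diag_congruence_pos by simp

lemma sum_alpha_squares: "(\<Sum>i\<in>UNIV. (alpha i)\<^sup>2) = trace (matrix_inv A)"
proof -
  have "(\<Sum>i\<in>UNIV. (alpha i)\<^sup>2) = trace (transpose U ** matrix_inv A ** U)"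
    by (simp add: trace_def diag_congruence_inv_A)
  also have "\<dots> = trace (U ** transpose U ** matrix_inv A)"
    by (simp add: trace_mul_sym[of _ U] matrix_mul_assoc)
  also have "\<dots> = trace (matrix_inv A)"
    using orthogonal_U by (simp add: orthogonal_matrix_def)
  finally show ?thesis .
qed

lemma det_edge_matrix_squared: "(det (edge_matrix v))\<^sup>2 = det A * (\<Prod>i\<in>UNIV. lam i)\<^sup>2"
proof -
  have "transpose (edge_matrix v) = (\<chi> i. (e i * lam i) *s (B *v column i U))"
    by (simp add: vec_eq_iff edge_matrix_def transpose_def edge_eq scalar_mult_eq_scaleR)
  also have "(\<chi> i. B *v column i U) = transpose (B ** U)"
    by (simp add: vec_eq_iff transpose_def matrix_matrix_mult_def matrix_vector_mult_def column_def)
  then have "det (\<chi> i. (e i * lam i) *s (B *v column i U)) = (\<Prod>i\<in>UNIV. e i * lam i) * (det B * det U)"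
    by (simp add: det_rows_mul det_transpose det_mul)
  finally have "det (edge_matrix v) = (\<Prod>i\<in>UNIV. e i * lam i) * (det B * det U)"
    by (simp add: det_transpose)
  moreover have "(\<Prod>i\<in>UNIV. e i * lam i)\<^sup>2 = (\<Prod>i\<in>UNIV. lam i)\<^sup>2"
  proof -
    have "(\<Prod>i\<in>UNIV. e i * lam i)\<^sup>2 = (\<Prod>i\<in>UNIV. (e i * lam i)\<^sup>2)"
      by (rule prod_power_distrib)
    also have "\<dots> = (\<Prod>i\<in>UNIV. (lam i)\<^sup>2)"
      by (simp add: power_mult_distrib sign_e_square)
    finally show ?thesis
      by (simp add: prod_power_distrib)
  qed
  moreover have "(det U)\<^sup>2 = 1"
    using det_orthogonal_matrix[OF orthogonal_U] by auto
  ultimately show ?thesis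
    by (simp add: det_A power_mult_distrib)
qed

lemma dual_basis_inverts_edge_matrix:
  "(\<chi> i. (1 / (e i * lam i)) *\<^sub>R (matrix_inv B *v column i U)) ** edge_matrix v = mat 1"
proof -
  have dual: "(matrix_inv B *v column i U) \<bullet> (B *v column j U) = (if i = j then 1 else 0)" for i j
    by (simp add: inner_inv_B orthogonal_matrix_columns_inner[OF orthogonal_U])
  have "e i * lam i \<noteq> 0" for i
    using sign_e_square[of i] lam_pos[of i] by auto
  then show ?thesis
    by (simp add: vec_eq_iff matrix_mult_entry_inner mat_def edge_eq dual)
qed

lemma gram_minor:
  "del_minor_det (transpose (edge_matrix v) ** edge_matrix v) i
     = det A * (\<Prod>j\<in>UNIV. lam j)\<^sup>2 * (alpha i / lam i)\<^sup>2"
proof -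
  have "del_minor_det (transpose (edge_matrix v) ** edge_matrix v) i
      = (det (edge_matrix v))\<^sup>2 * (norm ((1 / (e i * lam i)) *\<^sub>R (matrix_inv B *v column i U)))\<^sup>2"
    using del_minor_det_gram[OF dual_basis_inverts_edge_matrix] by simp
  also have "(norm ((1 / (e i * lam i)) *\<^sub>R (matrix_inv B *v column i U)))\<^sup>2 = (alpha i / lam i)\<^sup>2"
    using sign_e_square[of i] by (simp add: alpha_squared power_divide power_mult_distrib)
  finally show ?thesis
    by (simp add: det_edge_matrix_squared)
qed

lemma surface_area_eq:
  "surface_area v = 2 ^ CARD('n) * sqrt (det A) * ((\<Prod>i\<in>UNIV. beta i) * (\<Sum>i\<in>UNIV. alpha i / beta i))"
proof -
  have lam_eq: "lam i = 2 * beta i" for i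
    by (simp add: beta_eq)
  have prod_lam_pos: "(\<Prod>j\<in>UNIV. lam j) > 0"
    using lam_pos by (simp add: prod_pos)
  have "sqrt (del_minor_det (transpose (edge_matrix v) ** edge_matrix v) i)
      = sqrt (det A) * (\<Prod>j\<in>UNIV. lam j) * (alpha i / lam i)" for i
    using det_A_pos prod_lam_pos lam_pos[of i] alpha_pos[of i]
    by (simp add: gram_minor real_sqrt_mult abs_of_pos)
  then have "surface_area v = 2 * sqrt (det A) * (\<Prod>j\<in>UNIV. lam j) * (\<Sum>i\<in>UNIV. alpha i / lam i)"
    by (simp add: surface_area_def sum_distrib_left mult.assoc)
  also have "(\<Prod>j\<in>UNIV. lam j) = 2 ^ CARD('n) * (\<Prod>i\<in>UNIV. beta i)"
    by (simp add: lam_eq prod.distrib)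
  also have "(\<Sum>i\<in>UNIV. alpha i / lam i) = (\<Sum>i\<in>UNIV. alpha i / beta i) / 2"
    by (simp add: lam_eq sum_divide_distrib mult.commute)
  finally show ?thesis
    by simp
qed

lemma surface_area_bound_eq:
  "surface_area_bound A = 2 ^ CARD('n) * sqrt (det A)
     * (sqrt (\<Sum>i\<in>UNIV. (alpha i)\<^sup>2) * real CARD('n) powr (- (real CARD('n) - 2) / 2))"
  by (simp add: surface_area_bound_def sum_alpha_squares mult_ac)

lemma surface_area_le:
  assumes "CARD('n) \<ge> 2"
  shows "surface_area v \<le> surface_area_bound A"
proof -
  have "(\<Prod>i\<in>UNIV. beta i) * (\<Sum>i\<in>UNIV. alpha i / beta i)
      \<le> sqrt (\<Sum>i\<in>UNIV. (alpha i)\<^sup>2) * real CARD('n) powr (- (real CARD('n) - 2) / 2)"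
    using assms by (intro prod_mult_sum_div_le) (simp_all add: beta_pos sum_beta_squares)
  then show ?thesis
    unfolding surface_area_eq surface_area_bound_eq using det_A_pos by (simp add: mult_left_mono)
qed

lemma surface_area_eq_bound_iff:
  assumes "CARD('n) \<ge> 2"
  shows "surface_area v = surface_area_bound A
    \<longleftrightarrow> (\<exists>c. \<forall>i. alpha i = c * (1 / beta i))
        \<and> (CARD('n) \<ge> 3 \<longrightarrow> (\<forall>i. beta i = 1 / sqrt (real CARD('n))))"
proof -
  have "(\<Prod>i\<in>UNIV. beta i) * (\<Sum>i\<in>UNIV. alpha i / beta i)
      = sqrt (\<Sum>i\<in>UNIV. (alpha i)\<^sup>2) * real CARD('n) powr (- (real CARD('n) - 2) / 2)
    \<longleftrightarrow> (\<exists>c. \<forall>i\<in>UNIV. alpha i = c * (1 / beta i))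
        \<and> (CARD('n) \<ge> 3 \<longrightarrow> (\<forall>i\<in>UNIV. beta i = 1 / sqrt (real CARD('n))))"
    using assms by (intro prod_mult_sum_div_eq_iff) (simp_all add: beta_pos diag_congruence_pos sum_beta_squares)
  then show ?thesis
    unfolding surface_area_eq surface_area_bound_eq using det_A_pos by simp
qed

text \<open>Once all \<open>beta i\<close> agree, proportionality of \<open>alpha\<close> to \<open>1 / beta\<close> means that \<open>alpha\<close> is
  constant, and \<open>\<Sum> alpha\<^sup>2 = trace (matrix_inv A)\<close> fixes the constant.\<close>
lemma surface_area_eq_bound_iff_balanced:
  assumes "CARD('n) \<ge> 3"
  shows "surface_area v = surface_area_bound A
    \<longleftrightarrow> (\<forall>i. beta i = 1 / sqrt (real CARD('n)))
        \<and> (\<forall>i. (transpose U ** matrix_inv A ** U) $ i $ i = trace (matrix_inv A) / real CARD('n))"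
proof -
  define n where "n = real CARD('n)"
  have n_pos: "n > 0"
    by (simp add: n_def)
  have proportional_iff: "(\<forall>i. alpha i = c * (1 / beta i)) \<longleftrightarrow> (\<forall>i. alpha i = c * sqrt n)"
    if "\<forall>i. beta i = 1 / sqrt n" for c
    using that by simp
  have constant_iff: "(\<exists>c. \<forall>i. alpha i = c * sqrt n) \<longleftrightarrow> (\<forall>i. (alpha i)\<^sup>2 = trace (matrix_inv A) / n)"
  proof
    assume "\<exists>c. \<forall>i. alpha i = c * sqrt n"
    then obtain c where "\<And>i. alpha i = c * sqrt n"
      by blast
    then have alpha_sq: "(alpha i)\<^sup>2 = c\<^sup>2 * n" for i
      using n_pos by (simp add: power_mult_distrib)
    have "trace (matrix_inv A) = n * (c\<^sup>2 * n)"
      unfolding sum_alpha_squares[symmetric] by (simp add: alpha_sq n_def)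
    then show "\<forall>i. (alpha i)\<^sup>2 = trace (matrix_inv A) / n"
      using alpha_sq n_pos by simp
  next
    assume "\<forall>i. (alpha i)\<^sup>2 = trace (matrix_inv A) / n"
    then have "alpha i = sqrt (trace (matrix_inv A) / n)" for i
      using alpha_pos[of i] by (metis less_imp_le real_sqrt_unique)
    then have "\<forall>i. alpha i = (sqrt (trace (matrix_inv A) / n) / sqrt n) * sqrt n"
      using n_pos by simp
    then show "\<exists>c. \<forall>i. alpha i = c * sqrt n" ..
  qed
  have "surface_area v = surface_area_bound A
      \<longleftrightarrow> (\<exists>c. \<forall>i. alpha i = c * (1 / beta i)) \<and> (\<forall>i. beta i = 1 / sqrt n)"
    using surface_area_eq_bound_iff assms by (simp add: n_def)
  also have "\<dots> \<longleftrightarrow> (\<forall>i. beta i = 1 / sqrt n) \<and> (\<forall>i. (alpha i)\<^sup>2 = trace (matrix_inv A) / n)"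
    using proportional_iff constant_iff by blast
  finally show ?thesis
    by (simp add: n_def diag_congruence_pos less_imp_le)
qed

lemma inv_B_edge: "matrix_inv B *v v i = (e i * lam i) *\<^sub>R column i U"
  by (simp add: edge_eq matrix_vector_mult_scaleR)

lemma edge_scale_nonzero: "e i * lam i \<noteq> 0"
  using sign_e_square[of i] lam_pos[of i] by auto

lemma inj_edges: "inj v"
proof (rule injI)
  fix i j
  assume "v i = v j"
  then have "column i U \<bullet> (matrix_inv B *v v i) = column i U \<bullet> (matrix_inv B *v v j)"
    by simp
  then show "i = j"
    using edge_scale_nonzero[of i]
    by (simp add: inv_B_edge orthogonal_matrix_columns_inner[OF orthogonal_U] split: if_splits)
qed

lemma independent_edges: "independent (range v)"
proof -
  let ?W = "range (\<lambda>i. (e i * lam i) *\<^sub>R column i U)"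
  have "independent ?W"
  proof (rule pairwise_orthogonal_independent)
    show "pairwise orthogonal ?W"
      by (auto simp: pairwise_def orthogonal_def orthogonal_matrix_columns_inner[OF orthogonal_U])
    show "0 \<notin> ?W"
      using edge_scale_nonzero column_U_nonzero by (auto simp: eq_commute[of 0])
  qed
  moreover have "inj_on ((*v) B) (span ?W)"
    by (rule inj_onI) (metis inv_B_mult_B)
  ultimately have "independent ((*v) B ` ?W)"
    by (rule linear_independent_injective_image[OF Finite_Cartesian_Product.matrix_vector_mul_linear])
  moreover have "(*v) B ` ?W = range v"
    by (auto simp: edge_eq matrix_vector_mult_scaleR image_image)
  ultimately show ?thesis
    by simp
qed

lemma ell_form_vertex:
  assumes "sign_vec \<epsilon>"
  shows "ell_form A (vertex v \<epsilon>) = 1"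
proof -
  have "matrix_inv B *v vertex v \<epsilon> = (\<Sum>i\<in>UNIV. (\<epsilon> i * (e i * lam i) / 2) *\<^sub>R column i U)"
    by (simp add: vertex_def linear_sum[OF matrix_vector_mul_linear] matrix_vector_mult_scaleR
        scaleR_sum_right inv_B_edge)
  then have "ell_form A (vertex v \<epsilon>) = (\<Sum>i\<in>UNIV. (lam i / 2)\<^sup>2)"
    using sign_vec_square[OF assms]
    by (simp add: ell_form_eq_norm orthogonal_matrix_norm_sum_columns[OF orthogonal_U]
        power_mult_distrib power_divide sign_e_square)
  also have "\<dots> = 1"
    using sum_beta_squares by (simp add: beta_eq)
  finally show ?thesis .
qed

lemma inscribed_edges: "inscribed A v"
  by (simp add: inscribed_def inj_edges independent_edges ell_form_vertex)

end

context ellipsoid_root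
begin

text \<open>Rotating the frame \<open>(y, z)\<close> through a quarter turn swaps the signs of
  \<open>\<parallel>B\<^sup>-\<^sup>1 u\<^sub>1\<parallel>\<^sup>2 \<langle>u\<^sub>1, y\<rangle>\<^sup>2 - \<parallel>B\<^sup>-\<^sup>1 u\<^sub>2\<parallel>\<^sup>2 \<langle>u\<^sub>2, y\<rangle>\<^sup>2\<close>, so some intermediate frame balances them.\<close>
lemma planar_balanced_frame:
  assumes n2: "CARD('n) = 2" and y: "norm y = 1"
  obtains U where "orthogonal_matrix U" "\<And>i. column i U \<bullet> y > 0"
    "\<And>i j. norm (matrix_inv B *v column i U) * (column i U \<bullet> y)
           = norm (matrix_inv B *v column j U) * (column j U \<bullet> y)"
proof -
  obtain p q :: 'n where UNIV_eq: "UNIV = {p, q}" "p \<noteq> q"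
    using n2 card_2_iff by metis
  obtain z where z: "z \<bullet> z = 1" "y \<bullet> z = 0"
    using exists_unit_orthogonal[OF UNIV_eq(2) y] by blast
  have "y \<bullet> y = 1" "y \<noteq> 0"
    using y by (auto simp: norm_eq_1)
  obtain \<theta> where \<theta>: "0 < \<theta>" "\<theta> < pi/2"
    and balance: "(norm (matrix_inv B *v (cos \<theta> *\<^sub>R y + sin \<theta> *\<^sub>R z)))\<^sup>2 * (cos \<theta>)\<^sup>2
                  = (norm (matrix_inv B *v (sin \<theta> *\<^sub>R y - cos \<theta> *\<^sub>R z)))\<^sup>2 * (sin \<theta>)\<^sup>2"
    by (rule balancing_angle_exists[of "\<lambda>t. (norm (matrix_inv B *v (cos t *\<^sub>R y + sin t *\<^sub>R z)))\<^sup>2"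
          "\<lambda>t. (norm (matrix_inv B *v (sin t *\<^sub>R y - cos t *\<^sub>R z)))\<^sup>2"])
      (use \<open>y \<noteq> 0\<close> in \<open>simp_all add: matrix_vector_right_distrib matrix_vector_mult_diff_distrib
        matrix_vector_mult_scaleR continuous_intros\<close>)
  have cos_pos: "cos \<theta> > 0" and sin_pos: "sin \<theta> > 0"
    using \<theta> by (simp_all add: cos_gt_zero sin_gt_zero)
  define U :: "real^'n^'n"
    where "U = (\<chi> r c. (if c = p then cos \<theta> *\<^sub>R y + sin \<theta> *\<^sub>R z else sin \<theta> *\<^sub>R y - cos \<theta> *\<^sub>R z) $ r)"
  have columns: "column p U = cos \<theta> *\<^sub>R y + sin \<theta> *\<^sub>R z" "column q U = sin \<theta> *\<^sub>R y - cos \<theta> *\<^sub>R z"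
    using UNIV_eq(2) by (simp_all add: U_def column_def vec_eq_iff)
  have coordinates: "(cos \<theta> *\<^sub>R y + sin \<theta> *\<^sub>R z) \<bullet> y = cos \<theta>" "(sin \<theta> *\<^sub>R y - cos \<theta> *\<^sub>R z) \<bullet> y = sin \<theta>"
    using \<open>y \<bullet> y = 1\<close> z by (simp_all add: inner_add_right inner_diff_right inner_commute)
  have balance': "norm (matrix_inv B *v (cos \<theta> *\<^sub>R y + sin \<theta> *\<^sub>R z)) * cos \<theta>
      = norm (matrix_inv B *v (sin \<theta> *\<^sub>R y - cos \<theta> *\<^sub>R z)) * sin \<theta>"
  proof (rule power2_eq_imp_eq)
    show "(norm (matrix_inv B *v (cos \<theta> *\<^sub>R y + sin \<theta> *\<^sub>R z)) * cos \<theta>)\<^sup>2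
        = (norm (matrix_inv B *v (sin \<theta> *\<^sub>R y - cos \<theta> *\<^sub>R z)) * sin \<theta>)\<^sup>2"
      using balance by (simp only: power_mult_distrib)
  qed (use cos_pos sin_pos in simp_all)
  have index: "i = p \<or> i = q" for i
    using UNIV_eq(1) by blast
  have balanced: "norm (matrix_inv B *v column i U) * (column i U \<bullet> y)
      = norm (matrix_inv B *v column p U) * (column p U \<bullet> y)" for i
    using index[of i] by (elim disjE) (simp_all only: columns coordinates balance')
  have positive: "column i U \<bullet> y > 0" for i
    using index[of i] by (elim disjE) (simp_all only: columns coordinates cos_pos sin_pos)
  show ?thesis
  proof (rule that)
    show "orthogonal_matrix U"
      unfolding U_def by (rule planar_rotated_frame[OF UNIV_eq \<open>y \<bullet> y = 1\<close> z])
    show "column i U \<bullet> y > 0" for i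
      by (rule positive)
    show "norm (matrix_inv B *v column i U) * (column i U \<bullet> y)
        = norm (matrix_inv B *v column j U) * (column j U \<bullet> y)" for i j
      by (rule trans[OF balanced balanced[symmetric]])
  qed
qed

lemma planar_bound_attained:
  assumes n2: "CARD('n) = 2" and x0: "ell_form A x0 = 1"
  shows "\<exists>w. inscribed A w \<and> has_vertex w x0 \<and> surface_area w = surface_area_bound A"
proof -
  define y where "y = matrix_inv B *v x0"
  have "norm y = 1"
    using x0 by (simp add: y_def ell_form_eq_norm power2_norm_eq_inner norm_eq_1)
  then obtain U where U: "orthogonal_matrix U" and pos: "\<And>i. column i U \<bullet> y > 0"
    and balanced: "\<And>i j. norm (matrix_inv B *v column i U) * (column i U \<bullet> y)
                        = norm (matrix_inv B *v column j U) * (column j U \<bullet> y)"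
    using planar_balanced_frame[OF n2] by blast
  define lam where "lam i = 2 * (column i U \<bullet> y)" for i
  define w where "w i = lam i *\<^sub>R (B *v column i U)" for i
  have "vertex w (\<lambda>_. 1) = B *v (\<Sum>i\<in>UNIV. (column i U \<bullet> y) *\<^sub>R column i U)"
    by (simp add: vertex_def w_def lam_def linear_sum[OF matrix_vector_mul_linear]
        matrix_vector_mult_scaleR scaleR_sum_right)
  then have vertex: "vertex w (\<lambda>_. 1) = x0"
    by (simp add: orthogonal_matrix_expansion[OF U] y_def)
  interpret W: edge_decomposition A B w "\<lambda>_. 1" lam U
    by unfold_locales (use U pos x0 vertex in \<open>simp_all add: sign_vec_def lam_def w_def\<close>)
  have beta: "W.beta i = column i U \<bullet> y" for i
    by (simp add: vertex y_def)
  have alpha: "W.alpha i = norm (matrix_inv B *v column i U)" for i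
    by (simp add: diag_congruence_inv_A)
  fix k :: 'n
  have "W.alpha i = (W.alpha k * W.beta k) * (1 / W.beta i)" for i
    using balanced[of k i] pos[of i] by (simp add: alpha beta field_simps)
  then have "\<exists>c. \<forall>i. W.alpha i = c * (1 / W.beta i)"
    by blast
  then have "surface_area w = surface_area_bound A"
    using W.surface_area_eq_bound_iff n2 by simp
  moreover have "has_vertex w x0"
    using vertex by (auto simp: has_vertex_def sign_vec_def)
  ultimately show ?thesis
    using W.inscribed_edges by blast
qed

end

theorem proposition4p7:
  fixes A B :: "real^'n^'n" and x0 :: "real^'n"
    and v :: "'n \<Rightarrow> real^'n" and e :: "'n \<Rightarrow> real"
  assumes n2: "CARD('n) \<ge> 2"
    and A: "sym_pos_def A"
    and B: "sym_pos_def B" "B ** B = A"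
    and x0: "ell_form A x0 = 1"
    and P: "inscribed A v"
    and e: "sign_vec e" "vertex v e = x0"
  shows
   "let n = real CARD('n); C = matrix_inv A; y0 = matrix_inv B *v x0;
        bound = 2 ^ CARD('n) * n powr (- (n - 2) / 2) * sqrt (det A) * sqrt (trace C);
        decomp = (\<lambda>(lam::'n \<Rightarrow> real) (U::real^'n^'n). orthogonal_matrix U \<and>
                   (\<forall>i. lam i > 0 \<and> e i *\<^sub>R v i = lam i *\<^sub>R (B *v column i U)));
        beta = (\<lambda>U i. column i U \<bullet> y0);
        alpha = (\<lambda>U i. sqrt ((transpose U ** C ** U) $ i $ i))
    in surface_area v \<le> bound
     \<and> (CARD('n) \<ge> 3 \<longrightarrow>
          (\<forall>lam U. decomp lam U \<longrightarrow>
             (surface_area v = bound \<longleftrightarrow>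
                (\<forall>i. beta U i = 1 / sqrt n) \<and>
                (\<forall>i. (transpose U ** C ** U) $ i $ i = trace C / n))))
     \<and> (CARD('n) = 2 \<longrightarrow>
          (\<exists>w. inscribed A w \<and> has_vertex w x0 \<and> surface_area w = bound) \<and>
          (\<forall>lam U. decomp lam U \<longrightarrow>
             (surface_area v = bound \<longleftrightarrow>
                (\<exists>c. \<forall>i. alpha U i = c * (1 / beta U i)))))"
proof -
  interpret ellipsoid_root A B
    using B sym_pos_def_invertible[OF B(1)] by unfold_locales (simp_all add: sym_pos_def_def)
  have decomposition: "edge_decomposition A B v e lam U"
    if "orthogonal_matrix U \<and> (\<forall>i. lam i > 0 \<and> e i *\<^sub>R v i = lam i *\<^sub>R (B *v column i U))" for lam U
    using that e x0 by unfold_locales auto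
  obtain lam U where "orthogonal_matrix U \<and> (\<forall>i. lam i > 0 \<and> e i *\<^sub>R v i = lam i *\<^sub>R (B *v column i U))"
    using inscribed_decomposition[OF P e(1)] by metis
  then have bound: "surface_area v \<le> surface_area_bound A"
    using edge_decomposition.surface_area_le[OF decomposition n2] by blast
  have balanced: "surface_area v = surface_area_bound A
      \<longleftrightarrow> (\<forall>i. column i U \<bullet> (matrix_inv B *v x0) = 1 / sqrt (real CARD('n)))
        \<and> (\<forall>i. (transpose U ** matrix_inv A ** U) $ i $ i = trace (matrix_inv A) / real CARD('n))"
    if "CARD('n) \<ge> 3"
      and "orthogonal_matrix U \<and> (\<forall>i. lam i > 0 \<and> e i *\<^sub>R v i = lam i *\<^sub>R (B *v column i U))"
    for lam U
    unfolding e(2)[symmetric]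
    by (rule edge_decomposition.surface_area_eq_bound_iff_balanced[OF decomposition[OF that(2)] that(1)])
  have planar: "surface_area v = surface_area_bound A
      \<longleftrightarrow> (\<exists>c. \<forall>i. sqrt ((transpose U ** matrix_inv A ** U) $ i $ i)
                    = c * (1 / (column i U \<bullet> (matrix_inv B *v x0))))"
    if "CARD('n) = 2"
      and "orthogonal_matrix U \<and> (\<forall>i. lam i > 0 \<and> e i *\<^sub>R v i = lam i *\<^sub>R (B *v column i U))"
    for lam U
    unfolding e(2)[symmetric]
    using edge_decomposition.surface_area_eq_bound_iff[OF decomposition[OF that(2)]] that(1) by simp
  show ?thesis
    unfolding Let_def surface_area_bound_def[symmetric]
    using bound balanced planar planar_bound_attained[OF _ x0] by blast
qed

end
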